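(* Let $\nu\ge1$, $d:\mathbb{Z}^\nu\to\mathbb{C}$ bounded, $J=J_0+D$ on $\ell^2(\mathbb{Z}^\nu)$, and let $u\in\ell^2(\mathbb{Z}^\nu)$, $u\ne0$, satisfy $Ju=\lambda u$ for some $\lambda\in\mathbb{C}$. Then for every $j\in\{1,\dots,\nu\}$, $$\sup\{k_j: k\in\operatorname{supp}(u)\}=\infty\quad\text{and}\quad\inf\{k_j:k\in\operatorname{supp}(u)\}=-\infty,$$ where $k_j$ denotes the $j$-th component of $k\in\mathbb{Z}^\nu$ and $\operatorname{supp}(u)=\{k\in\mathbb{Z}^\nu:u(k)\ne0\}$.
   Context: $J_0$ is the discrete Laplacian on $\ell^2(\mathbb{Z}^\nu)$: $(J_0u)(k)=\sum_{l\in\mathbb{Z}^\nu:\|l\|_1=1}u(k+l)$, where $\|l\|_1=\sum_{j=1}^\nu|l_j|$. $D$ is multiplication by the bounded function $d$, $(Du)(k)=d(k)u(k)$. *)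

theory Defs
  imports "HOL-Analysis.Analysis"
begin

text \<open>Points of Z^nu are vectors of type int ^ 'n, where the finite type 'n
  has CARD('n) = nu elements (nu \<ge> 1 is automatic since types are nonempty).\<close>

definition l1norm :: "int ^ 'n \<Rightarrow> int" where
  "l1norm l = (\<Sum>j\<in>UNIV. \<bar>l $ j\<bar>)"

definition J0 :: "(int ^ 'n \<Rightarrow> complex) \<Rightarrow> (int ^ 'n \<Rightarrow> complex)" where
  "J0 u k = (\<Sum>l\<in>{l. l1norm l = 1}. u (k + l))"

definition Dmul :: "(int ^ 'n \<Rightarrow> complex) \<Rightarrow> (int ^ 'n \<Rightarrow> complex) \<Rightarrow> (int ^ 'n \<Rightarrow> complex)" where
  "Dmul d u k = d k * u k"

definition Jac :: "(int ^ 'n \<Rightarrow> complex) \<Rightarrow> (int ^ 'n \<Rightarrow> complex) \<Rightarrow> (int ^ 'n \<Rightarrow> complex)" where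
  "Jac d u = (\<lambda>k. J0 u k + Dmul d u k)"

definition is_l2 :: "(int ^ 'n \<Rightarrow> complex) \<Rightarrow> bool" where
  "is_l2 u \<longleftrightarrow> (\<lambda>k. (norm (u k))\<^sup>2) summable_on UNIV"

definition supp :: "(int ^ 'n \<Rightarrow> complex) \<Rightarrow> (int ^ 'n) set" where
  "supp u = {k. u k \<noteq> 0}"

end

theory Submission
  imports Defs
begin

(* Suppose the support of u is bounded in some coordinate
   direction, say s * k$j <= M on supp u for a sign s in {1,-1}.  Take a support
   point k that is extremal, i.e. maximises s * k$j, and look at the point
   p = k + s e_j just outside the support.  Among the 2 nu neighbours p + l of p
   (l a unit step), only p - s e_j = k can lie in the support, since every other
   step does not decrease s * (.)$j.  Hence (J0 u)(p) = u(k) <> 0 while u(p) = 0,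
   which contradicts the eigenvalue equation (J0 u)(p) = (lam - d p) u(p). *)

abbreviation unit_steps :: "(int ^ 'n) set" where
  "unit_steps \<equiv> {l. l1norm l = 1}"

lemma unit_step_component_bound:
  assumes "l \<in> unit_steps"
  shows "\<bar>l $ j\<bar> \<le> 1"
  using member_le_sum[of j UNIV "\<lambda>i. \<bar>l $ i\<bar>"] assms by (simp add: l1norm_def)

lemma finite_unit_steps: "finite (unit_steps :: (int ^ 'n) set)"
proof (rule finite_subset)
  show "(unit_steps :: (int ^ 'n) set) \<subseteq> vec_lambda ` (PiE UNIV (\<lambda>_. {-1..1::int}))"
  proof
    fix l :: "int ^ 'n"
    assume "l \<in> unit_steps"
    then have "\<bar>l $ i\<bar> \<le> 1" for i by (rule unit_step_component_bound)
    then have "vec_nth l \<in> PiE UNIV (\<lambda>_. {-1..1::int})"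
      by (auto simp: PiE_UNIV_domain abs_le_iff)
    then show "l \<in> vec_lambda ` (PiE UNIV (\<lambda>_. {-1..1::int}))"
      by (metis image_eqI vec_nth_inverse)
  qed
  show "finite (vec_lambda ` (PiE UNIV (\<lambda>_. {-1..1::int})) :: (int ^ 'n) set)"
    by (intro finite_imageI finite_PiE) auto
qed

lemma axis_unit_step:
  assumes "s \<in> {1, -1::int}"
  shows "(- axis j s :: int ^ 'n) \<in> unit_steps"
proof -
  have "(\<Sum>i\<in>UNIV. \<bar>(- axis j s :: int ^ 'n) $ i\<bar>) = (\<Sum>i\<in>UNIV. if i = j then 1 else 0)"
    using assms by (intro sum.cong) (auto simp: axis_def)
  then show ?thesis by (simp add: l1norm_def)
qed

lemma unit_step_eq_axis:
  assumes l: "l \<in> unit_steps" and lj: "l $ j = - s" and s: "s \<in> {1, -1::int}"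
  shows "l = - axis j s"
proof -
  have "\<bar>l $ j\<bar> + (\<Sum>i\<in>UNIV - {j}. \<bar>l $ i\<bar>) = 1"
    using l by (simp add: l1norm_def sum.remove)
  moreover have "\<bar>l $ j\<bar> = 1" using lj s by auto
  ultimately have "(\<Sum>i\<in>UNIV - {j}. \<bar>l $ i\<bar>) = 0" by simp
  then have "\<forall>i\<in>UNIV - {j}. l $ i = 0"
    by (subst (asm) sum_nonneg_eq_0_iff) auto
  then show ?thesis using lj by (auto simp: vec_eq_iff axis_def)
qed

lemma unit_step_signed_component_nonneg:
  assumes l: "l \<in> unit_steps" and ne: "l \<noteq> - axis j s" and s: "s \<in> {1, -1::int}"
  shows "s * l $ j \<ge> 0"
proof -
  have "\<bar>s * l $ j\<bar> \<le> 1"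
    using unit_step_component_bound[OF l, of j] s by (auto simp: abs_mult)
  moreover have "s * l $ j \<noteq> -1"
    using unit_step_eq_axis[OF l _ s] ne s by auto
  ultimately show ?thesis by linarith
qed

lemma extremal_support_point:
  fixes u :: "int ^ 'n \<Rightarrow> 'a::zero"
  assumes bd: "\<And>k. u k \<noteq> 0 \<Longrightarrow> s * k $ j \<le> M" and nz: "u k0 \<noteq> 0"
  obtains k where "u k \<noteq> 0" and "\<And>k'. u k' \<noteq> 0 \<Longrightarrow> s * k' $ j \<le> s * k $ j"
proof -
  define T where "T = (\<lambda>k. s * k $ j) ` {k. u k \<noteq> 0} \<inter> {s * k0 $ j..}"
  have "T \<subseteq> {s * k0 $ j..M}" using bd by (auto simp: T_def)
  then have fin: "finite T" by (rule finite_subset) simp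
  have k0T: "s * k0 $ j \<in> T" using nz by (auto simp: T_def)
  then have "Max T \<in> T" using fin by (intro Max_in) auto
  then obtain k where "u k \<noteq> 0" and "s * k $ j = Max T" by (auto simp: T_def)
  moreover have "s * k' $ j \<le> Max T" if "u k' \<noteq> 0" for k'
  proof (cases "s * k0 $ j \<le> s * k' $ j")
    case True
    then show ?thesis using that fin by (intro Max_ge) (auto simp: T_def)
  next
    case False
    then show ?thesis using Max_ge[OF fin k0T] by simp
  qed
  ultimately show ?thesis using that by metis
qed

lemma J0_beyond_extremal_point:
  fixes u :: "int ^ 'n \<Rightarrow> complex"
  assumes s: "s \<in> {1, -1::int}"
    and mx: "\<And>k'. u k' \<noteq> 0 \<Longrightarrow> s * k' $ j \<le> s * k $ j"
  shows "J0 u (k + axis j s) = u k"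
proof -
  define p where "p = k + axis j s"
  define a :: "int ^ 'n" where "a = - axis j s"
  have ss: "s * s = 1" using s by auto
  have pj: "s * p $ j = s * k $ j + 1" using ss by (simp add: p_def axis_def algebra_simps)
  have outside: "u (p + l) = 0" if "l \<in> unit_steps - {a}" for l
  proof -
    have "s * l $ j \<ge> 0"
      using unit_step_signed_component_nonneg[of l j s] that s by (simp add: a_def)
    then have "s * (p + l) $ j > s * k $ j" using pj by (simp add: algebra_simps)
    then show ?thesis using mx by force
  qed
  have "J0 u p = u (p + a) + (\<Sum>l\<in>unit_steps - {a}. u (p + l))"
    unfolding J0_def
    using sum.remove[OF finite_unit_steps axis_unit_step[OF s], of "\<lambda>l. u (p + l)" j]
    by (simp add: a_def)
  also have "\<dots> = u k" using outside by (simp add: p_def a_def)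
  finally show ?thesis by (simp add: p_def)
qed

text \<open>Half-space lemma: a nonzero u for which J0 u vanishes wherever u vanishes
  (in particular any eigenfunction of J0 + D) cannot have support contained in a
  half-space \<open>s \<cdot> k$j \<le> M\<close>.\<close>
lemma support_not_in_half_space:
  fixes u :: "int ^ 'n \<Rightarrow> complex"
  assumes local_eq: "\<And>p. u p = 0 \<Longrightarrow> J0 u p = 0"
    and s: "s \<in> {1, -1::int}"
    and bd: "\<And>k. u k \<noteq> 0 \<Longrightarrow> s * k $ j \<le> M"
    and nz: "u k0 \<noteq> 0"
  shows False
proof -
  obtain k where uk: "u k \<noteq> 0" and mx: "\<And>k'. u k' \<noteq> 0 \<Longrightarrow> s * k' $ j \<le> s * k $ j"
    using extremal_support_point[of u s j M k0] bd nz by blast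
  have "s * (k + axis j s) $ j = s * k $ j + s * s" by (simp add: axis_def algebra_simps)
  moreover have "s * s = 1" using s by auto
  ultimately have "u (k + axis j s) = 0" using mx[of "k + axis j s"] by force
  then have "J0 u (k + axis j s) = 0" by (rule local_eq)
  then show False using J0_beyond_extremal_point[OF s mx] uk by simp
qed

theorem mainTheorem4:
  fixes d u :: "int ^ 'n \<Rightarrow> complex" and lam :: complex
  assumes "bounded (range d)"
    and "is_l2 u"
    and "u \<noteq> (\<lambda>_. 0)"
    and "Jac d u = (\<lambda>k. lam * u k)"
  shows "\<forall>j. (\<forall>M::int. \<exists>k\<in>supp u. k $ j > M) \<and> (\<forall>M::int. \<exists>k\<in>supp u. k $ j < M)"
proof -
  have "J0 u k = (lam - d k) * u k" for k
    using fun_cong[OF assms(4), of k] by (simp add: Jac_def Dmul_def algebra_simps)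
  then have local_eq: "u p = 0 \<Longrightarrow> J0 u p = 0" for p by simp
  obtain k0 where nz: "u k0 \<noteq> 0" using assms(3) by auto
  have above: "\<exists>k\<in>supp u. k $ j > M" for j M
    using support_not_in_half_space[OF local_eq, of 1 j M k0] nz
    by (force simp: supp_def not_less)
  have below: "\<exists>k\<in>supp u. k $ j < M" for j M
    using support_not_in_half_space[OF local_eq, of "-1" j "-M" k0] nz
    by (force simp: supp_def not_less)
  show ?thesis using above below by blast
qed

end
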